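(* For any stable pair of cross-intersecting families $(\mathcal{A}, \mathcal{B})$ in $\mathcal{I}_{n, k}^r$, the pair $(\phi(\mathcal{A}), \phi(\mathcal{B}))$ is a cross-intersecting pair of families in $\binom{[n]}{\leq r}$.
   Context: $\Gamma_{n,k}$ is the disjoint union of $n$ copies of $K_k$, with vertices $(i,j)$, $i\in[n]$, $j\in[k]$; $\mathcal{I}_{n,k}^r$ is the set of its independent sets of size $r$. $\binom{[n]}{\le r}$ denotes the set of subsets of $[n]$ of size at most $r$. The projection $\phi:\mathcal{I}_{n,k}^r\to\binom{[n]}{\le r}$ is $\phi(X)=\{i : (i,1)\in X\}$, and $\phi(\mathcal{F})=\{\phi(X):X\in\mathcal{F}\}$. For $i\in[n]$, $s\in[2,k]$: $P_{i,s}(X)=(X\setminus\{(i,s)\})\cup\{(i,1)\}$ if $(i,s)\in X$, else $X$; $\pi_{i,s}(\mathcal{F})=\{P_{i,s}(X): X\in\mathcal{F}\}\cup\{X\in\mathcal{F}: P_{i,s}(X)\in\mathcal{F}\}$. A family is stable if $\pi_{i,s}(\mathcal{F})=\mathcal{F}$ for all $i\in[n],s\in[2,k]$; a pair is stable if both families are. A pair of non-empty families (of non-empty sets) is cross-intersecting if every member of the first meets every member of the second. *)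

theory Defs
  imports Main
begin

(* Vertices of Gamma_{n,k}: pairs (i,j) with i in [n] = {1..n}, j in [k] = {1..k}.
   Two distinct vertices are adjacent iff they lie in the same copy of K_k, i.e.
   have the same first coordinate. *)

definition vertices :: "nat \<Rightarrow> nat \<Rightarrow> (nat \<times> nat) set" where
  "vertices n k = {1..n} \<times> {1..k}"

definition independent :: "nat \<Rightarrow> nat \<Rightarrow> (nat \<times> nat) set \<Rightarrow> bool" where
  "independent n k X \<longleftrightarrow> X \<subseteq> vertices n k \<and>
     (\<forall>x\<in>X. \<forall>y\<in>X. x \<noteq> y \<longrightarrow> fst x \<noteq> fst y)"

definition indep_sets :: "nat \<Rightarrow> nat \<Rightarrow> nat \<Rightarrow> (nat \<times> nat) set set" where
  "indep_sets n k r = {X. independent n k X \<and> card X = r}"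

definition subsets_le :: "nat \<Rightarrow> nat \<Rightarrow> nat set set" where
  "subsets_le n r = {S. S \<subseteq> {1..n} \<and> card S \<le> r}"

definition proj :: "(nat \<times> nat) set \<Rightarrow> nat set" where
  "proj X = {i. (i, 1) \<in> X}"

definition shiftP :: "nat \<Rightarrow> nat \<Rightarrow> (nat \<times> nat) set \<Rightarrow> (nat \<times> nat) set" where
  "shiftP i s X = (if (i, s) \<in> X then (X - {(i, s)}) \<union> {(i, 1)} else X)"

definition shiftF :: "nat \<Rightarrow> nat \<Rightarrow> (nat \<times> nat) set set \<Rightarrow> (nat \<times> nat) set set" where
  "shiftF i s F = {shiftP i s X | X. X \<in> F} \<union> {X \<in> F. shiftP i s X \<in> F}"

definition stable :: "nat \<Rightarrow> nat \<Rightarrow> (nat \<times> nat) set set \<Rightarrow> bool" where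
  "stable n k F \<longleftrightarrow> (\<forall>i\<in>{1..n}. \<forall>s\<in>{2..k}. shiftF i s F = F)"

definition cross_intersecting :: "'a set set \<Rightarrow> 'a set set \<Rightarrow> bool" where
  "cross_intersecting A B \<longleftrightarrow> A \<noteq> {} \<and> B \<noteq> {} \<and>
     (\<forall>X\<in>A. X \<noteq> {}) \<and> (\<forall>Y\<in>B. Y \<noteq> {}) \<and>
     (\<forall>X\<in>A. \<forall>Y\<in>B. X \<inter> Y \<noteq> {})"

end

theory Submission
  imports Defs
begin

text \<open>If \<open>\<phi>(X)\<close> and \<open>\<phi>(Y)\<close> were disjoint for some \<open>X \<in> \<A>\<close>, \<open>Y \<in> \<B>\<close>, then every common
  vertex \<open>(i, s)\<close> of \<open>X\<close> and \<open>Y\<close> has \<open>s \<ge> 2\<close>. Stability of \<open>\<B>\<close> lets us move all these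
  vertices of \<open>Y\<close> down to \<open>(i, 1)\<close> without leaving \<open>\<B>\<close>, and the result is disjoint from \<open>X\<close>:
  being independent, \<open>X\<close> cannot contain \<open>(i, 1)\<close> together with \<open>(i, s)\<close>.
  This contradicts cross-intersection.\<close>

definition shift_down :: "(nat \<times> nat) set \<Rightarrow> (nat \<times> nat) set \<Rightarrow> (nat \<times> nat) set" where
  "shift_down S Y = (Y - S) \<union> (\<lambda>p. (fst p, 1)) ` S"

lemma stable_shiftP_mem:
  assumes "stable n k F" "Y \<in> F" "i \<in> {1..n}" "s \<in> {2..k}"
  shows "shiftP i s Y \<in> F"
proof -
  have "shiftF i s F = F" using assms unfolding stable_def by blast
  then show ?thesis using assms(2) unfolding shiftF_def by blast
qed

lemma stable_shift_down_mem:
  assumes st: "stable n k F" and Y: "Y \<in> F"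
    and fin: "finite S" and S: "S \<subseteq> Y \<inter> ({1..n} \<times> {2..k})"
  shows "shift_down S Y \<in> F"
  using fin S
proof (induction S rule: finite_induct)
  case empty
  then show ?case using Y by (simp add: shift_down_def)
next
  case (insert p S)
  obtain i s where p: "p = (i, s)" by (cases p)
  have IH: "shift_down S Y \<in> F" using insert by blast
  have range: "i \<in> {1..n}" "s \<in> {2..k}" and "(i, s) \<in> Y" using insert p by auto
  then have "(i, s) \<in> shift_down S Y"
    using insert(2) p by (auto simp: shift_down_def)
  then have "shiftP i s (shift_down S Y) = shift_down (insert p S) Y"
    using range p unfolding shiftP_def shift_down_def by auto
  then show ?case using stable_shiftP_mem[OF st IH range] by simp
qed

lemma independent_finite:
  assumes "independent n k X"
  shows "finite X"
proof (rule finite_subset)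
  show "X \<subseteq> {1..n} \<times> {1..k}"
    using assms unfolding independent_def vertices_def by simp
qed simp

lemma proj_mem_subsets_le:
  assumes "X \<in> indep_sets n k r"
  shows "proj X \<in> subsets_le n r"
proof -
  have X: "independent n k X" "card X = r"
    using assms unfolding indep_sets_def by auto
  have "card (proj X) = card ((\<lambda>i. (i, 1::nat)) ` proj X)"
    by (rule card_image[symmetric]) (auto simp: inj_on_def)
  also have "\<dots> \<le> card X"
    by (rule card_mono[OF independent_finite[OF X(1)]]) (auto simp: proj_def)
  finally show ?thesis
    using X unfolding subsets_le_def proj_def independent_def vertices_def by auto
qed

lemma stable_proj_Int_nonempty:
  assumes X: "independent n k X" and Y: "independent n k Y"
    and st: "stable n k B" and YB: "Y \<in> B"
    and meets: "\<forall>Y'\<in>B. X \<inter> Y' \<noteq> {}"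
  shows "proj X \<inter> proj Y \<noteq> {}"
proof
  assume disj: "proj X \<inter> proj Y = {}"
  let ?S = "X \<inter> Y"
  have S_high: "?S \<subseteq> Y \<inter> ({1..n} \<times> {2..k})"
  proof
    fix p assume p: "p \<in> ?S"
    then have "snd p \<noteq> 1" using disj unfolding proj_def by (cases p) auto
    then show "p \<in> Y \<inter> ({1..n} \<times> {2..k})"
      using p Y unfolding independent_def vertices_def by (cases p) auto
  qed
  have "finite ?S" using independent_finite[OF X] by simp
  then have shifted: "shift_down ?S Y \<in> B"
    using stable_shift_down_mem[OF st YB _ S_high] by blast
  have "(i, 1) \<notin> X" if "(i, s) \<in> ?S" for i s
  proof
    assume "(i, 1) \<in> X"
    moreover have "(i, s) \<in> X" "s \<noteq> 1" using that S_high by auto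
    ultimately show False using X unfolding independent_def by fastforce
  qed
  then have "X \<inter> shift_down ?S Y = {}"
    unfolding shift_down_def by fastforce
  then show False using meets shifted by blast
qed

lemma cross_intersecting_image:
  assumes "A \<noteq> {}" "B \<noteq> {}"
    and meet: "\<And>X Y. X \<in> A \<Longrightarrow> Y \<in> B \<Longrightarrow> f X \<inter> f Y \<noteq> {}"
  shows "cross_intersecting (f ` A) (f ` B)"
  unfolding cross_intersecting_def
proof (intro conjI ballI)
  show "f ` A \<noteq> {}" "f ` B \<noteq> {}" using assms(1,2) by auto
  fix X' assume "X' \<in> f ` A"
  then show "X' \<noteq> {}" using meet assms(2) by blast
next
  fix Y' assume "Y' \<in> f ` B"
  then show "Y' \<noteq> {}" using meet assms(1) by blast
next
  fix X' Y' assume "X' \<in> f ` A" "Y' \<in> f ` B"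
  then show "X' \<inter> Y' \<noteq> {}" using meet by blast
qed

theorem corollary4p3:
  fixes n k r :: nat and A B :: "(nat \<times> nat) set set"
  assumes "A \<subseteq> indep_sets n k r" and "B \<subseteq> indep_sets n k r"
    and "stable n k A" and "stable n k B"
    and "cross_intersecting A B"
  shows "proj ` A \<subseteq> subsets_le n r \<and> proj ` B \<subseteq> subsets_le n r \<and>
         cross_intersecting (proj ` A) (proj ` B)"
proof -
  have indep: "independent n k Z" if "Z \<in> A \<union> B" for Z
    using that assms(1,2) unfolding indep_sets_def by auto
  have meet: "proj X \<inter> proj Y \<noteq> {}" if X: "X \<in> A" and Y: "Y \<in> B" for X Y
  proof (rule stable_proj_Int_nonempty[OF _ _ assms(4) Y])
    show "independent n k X" "independent n k Y" using indep X Y by auto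
    show "\<forall>Y'\<in>B. X \<inter> Y' \<noteq> {}"
      using assms(5) X unfolding cross_intersecting_def by blast
  qed
  have "A \<noteq> {}" "B \<noteq> {}"
    using assms(5) unfolding cross_intersecting_def by auto
  then have "cross_intersecting (proj ` A) (proj ` B)"
    using meet by (rule cross_intersecting_image)
  moreover have "proj ` A \<subseteq> subsets_le n r" "proj ` B \<subseteq> subsets_le n r"
    using assms(1,2) proj_mem_subsets_le by auto
  ultimately show ?thesis by blast
qed

end
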